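(* Let $G$ be a finite simple graph with a clique vertex-partition $\Pi$, and let $t\ge 2$ be an integer. Then $\mathrm{CF}_t(G(\Pi,t))$ is $(t-2)$-decomposable. Consequently, $\mathrm{CF}_t(G(\Pi,t))$ is shellable.
   Context: A clique vertex-partition of $G$ is a collection $\Pi=\{W_1,\dots,W_p\}$ of pairwise disjoint (possibly empty) vertex sets each inducing a clique, whose union is $V(G)$. The $t$-clique whiskering $G(\Pi,t)$ is obtained from $G$ by adding, for each $i$, $t-1$ new distinct vertices $x_{i,1},\dots,x_{i,t-1}$ and making $W_i\cup\{x_{i,1},\dots,x_{i,t-1}\}$ a clique; no other edges are added. $\mathrm{CF}_t(\cdot)$ is the simplicial complex on the vertex set whose faces are the vertex subsets inducing no $t$-clique. For a simplicial complex $\Delta$ on $V$ and face $F$: $\operatorname{link}_\Delta(F)=\{F':F'\cap F=\emptyset,F'\cup F\in\Delta\}$, $\Delta\setminus F=\{H\in\Delta:H\cap F=\emptyset\}$, $\dim F=|F|-1$. A face $\sigma$ is a shedding face if for every $\tau\in\Delta$ with $\sigma\subseteq\tau$ and every $v\in\sigma$ there is $w\in V\setminus\tau$ with $(\tau\cup\{w\})\setminus\{v\}\in\Delta$. $\Delta$ is $k$-decomposable if it is a simplex (including $\emptyset$, $\{\emptyset\}$) or has a shedding face $\sigma$ with $\dim\sigma\le k$ such that $\Delta\setminus\sigma$ and $\operatorname{link}_\Delta(\sigma)$ are $k$-decomposable. $\Delta$ is shellable if its facets admit an order $F_1,\dots,F_s$ such that for all $i<j$ there exist $v\in F_j\setminus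 F_i$ and $\ell<j$ with $F_j\setminus F_\ell=\{v\}$. *)

theory Defs
  imports Main
begin

definition simple_graph :: "'a set \<Rightarrow> ('a \<Rightarrow> 'a \<Rightarrow> bool) \<Rightarrow> bool" where
  "simple_graph V E \<longleftrightarrow> finite V \<and> (\<forall>u v. E u v \<longrightarrow> u \<in> V \<and> v \<in> V)
     \<and> (\<forall>u v. E u v \<longrightarrow> E v u) \<and> (\<forall>u. \<not> E u u)"

definition is_clique :: "'a set \<Rightarrow> ('a \<Rightarrow> 'a \<Rightarrow> bool) \<Rightarrow> 'a set \<Rightarrow> bool" where
  "is_clique V E W \<longleftrightarrow> W \<subseteq> V \<and> (\<forall>u\<in>W. \<forall>v\<in>W. u \<noteq> v \<longrightarrow> E u v)"

text \<open>A clique vertex-partition \<open>\<Pi> = {W_1,...,W_p}\<close>, given as the list [W_1,...,W_p]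
  (so that empty or repeated empty blocks are allowed and indexed).\<close>
definition clique_vertex_partition ::
  "'a set \<Rightarrow> ('a \<Rightarrow> 'a \<Rightarrow> bool) \<Rightarrow> 'a set list \<Rightarrow> bool" where
  "clique_vertex_partition V E \<Pi> \<longleftrightarrow>
     (\<forall>i < length \<Pi>. is_clique V E (\<Pi> ! i))
     \<and> (\<forall>i < length \<Pi>. \<forall>j < length \<Pi>. i \<noteq> j \<longrightarrow> \<Pi> ! i \<inter> \<Pi> ! j = {})
     \<and> \<Union> (set \<Pi>) = V"

text \<open>The t-clique whiskering G(\<Pi>,t): old vertices are \<open>Inl v\<close>, the new vertex
  x_{i,j} (i-th block, j = 1..t-1) is \<open>Inr (i, j)\<close>.\<close>
definition whisk_V :: "'a set \<Rightarrow> 'a set list \<Rightarrow> nat \<Rightarrow> ('a + nat \<times> nat) set" where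
  "whisk_V V \<Pi> t = Inl ` V \<union> {Inr (i, j) | i j. i < length \<Pi> \<and> 1 \<le> j \<and> j \<le> t - 1}"

fun whisk_E :: "('a \<Rightarrow> 'a \<Rightarrow> bool) \<Rightarrow> 'a set list \<Rightarrow> nat
                 \<Rightarrow> ('a + nat \<times> nat) \<Rightarrow> ('a + nat \<times> nat) \<Rightarrow> bool" where
  "whisk_E E \<Pi> t (Inl u) (Inl v) = E u v"
| "whisk_E E \<Pi> t (Inl u) (Inr (i, j)) =
     (i < length \<Pi> \<and> 1 \<le> j \<and> j \<le> t - 1 \<and> u \<in> \<Pi> ! i)"
| "whisk_E E \<Pi> t (Inr (i, j)) (Inl u) =
     (i < length \<Pi> \<and> 1 \<le> j \<and> j \<le> t - 1 \<and> u \<in> \<Pi> ! i)"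
| "whisk_E E \<Pi> t (Inr (i, j)) (Inr (i', j')) =
     (i < length \<Pi> \<and> 1 \<le> j \<and> j \<le> t - 1 \<and> 1 \<le> j' \<and> j' \<le> t - 1 \<and> i = i' \<and> j \<noteq> j')"

definition CF :: "nat \<Rightarrow> 'b set \<Rightarrow> ('b \<Rightarrow> 'b \<Rightarrow> bool) \<Rightarrow> 'b set set" where
  "CF t V E = {S. S \<subseteq> V \<and> \<not> (\<exists>C \<subseteq> S. card C = t \<and> is_clique V E C)}"

definition link :: "'b set set \<Rightarrow> 'b set \<Rightarrow> 'b set set" where
  "link \<Delta> F = {F'. F' \<inter> F = {} \<and> F' \<union> F \<in> \<Delta>}"

definition deletion :: "'b set set \<Rightarrow> 'b set \<Rightarrow> 'b set set" where
  "deletion \<Delta> F = {H \<in> \<Delta>. H \<inter> F = {}}"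

text \<open>The vertex set of \<Delta> is its union; a witness w with a face containing it is
  automatically a vertex.\<close>
definition shedding_face :: "'b set set \<Rightarrow> 'b set \<Rightarrow> bool" where
  "shedding_face \<Delta> \<sigma> \<longleftrightarrow> \<sigma> \<in> \<Delta> \<and>
     (\<forall>\<tau> \<in> \<Delta>. \<sigma> \<subseteq> \<tau> \<longrightarrow> (\<forall>v \<in> \<sigma>. \<exists>w. w \<notin> \<tau> \<and> (\<tau> \<union> {w}) - {v} \<in> \<Delta>))"

definition is_simplex :: "'b set set \<Rightarrow> bool" where
  "is_simplex \<Delta> \<longleftrightarrow> \<Delta> = {} \<or> (\<exists>F. finite F \<and> \<Delta> = Pow F)"

definition dim_face :: "'b set \<Rightarrow> int" where
  "dim_face F = int (card F) - 1"

inductive k_decomposable :: "int \<Rightarrow> 'b set set \<Rightarrow> bool" where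
  simplex: "is_simplex \<Delta> \<Longrightarrow> k_decomposable k \<Delta>"
| shed: "shedding_face \<Delta> \<sigma> \<Longrightarrow> dim_face \<sigma> \<le> k \<Longrightarrow>
         k_decomposable k (deletion \<Delta> \<sigma>) \<Longrightarrow> k_decomposable k (link \<Delta> \<sigma>) \<Longrightarrow>
         k_decomposable k \<Delta>"

definition facets :: "'b set set \<Rightarrow> 'b set set" where
  "facets \<Delta> = {F \<in> \<Delta>. \<forall>G \<in> \<Delta>. F \<subseteq> G \<longrightarrow> G = F}"

definition shellable :: "'b set set \<Rightarrow> bool" where
  "shellable \<Delta> \<longleftrightarrow> (\<exists>Fs. distinct Fs \<and> set Fs = facets \<Delta> \<and>
     (\<forall>i j. i < j \<and> j < length Fs \<longrightarrow>
        (\<exists>v \<in> Fs ! j - Fs ! i. \<exists>l < j. Fs ! j - Fs ! l = {v})))"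

end

theory Submission
  imports Defs
begin

(* CF_t(G(Pi,t)) is in fact vertex decomposable, i.e. decomposable using shedding faces of
   dimension 0, and vertex decomposable complexes are shellable: if v is a shedding vertex, a
   shelling of the deletion of v followed by the cone with apex v over a shelling of the link
   of v is a shelling.

   For a block W_i let K_i (block i) consist of W_i and its t - 1 whiskers. K_i is a clique,
   so a face meets it in fewer than t vertices, and every clique through a whisker of W_i lies
   in K_i. Hence any vertex of a face S lying in K_i may be exchanged for a whisker of W_i
   outside S. The complexes lk(A) \ D (the link of A with the vertices of D deleted) are
   decomposed by shedding one vertex at a time. As long as no whisker has been deleted, an
   original vertex of W_i is shedding: a face containing it misses one of the t - 1 whiskers
   of W_i. Once the original vertices are used up, the complex is a simplex unless some
   t-clique meets the remaining vertices; a remaining vertex of that clique is then a whisker,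
   and it is shedding because every face misses some vertex of the clique. *)

section \<open>Vertex decomposable complexes\<close>

definition down_closed :: "'b set set \<Rightarrow> bool" where
  "down_closed \<Delta> \<longleftrightarrow> (\<forall>S\<in>\<Delta>. \<forall>T\<subseteq>S. T \<in> \<Delta>)"

inductive vertex_decomposable :: "'b set set \<Rightarrow> bool" where
  simplex: "is_simplex \<Delta> \<Longrightarrow> vertex_decomposable \<Delta>"
| shed: "shedding_face \<Delta> {v} \<Longrightarrow> vertex_decomposable (deletion \<Delta> {v}) \<Longrightarrow>
         vertex_decomposable (link \<Delta> {v}) \<Longrightarrow> vertex_decomposable \<Delta>"

lemma vertex_decomposable_imp_k_decomposable:
  assumes "vertex_decomposable \<Delta>" and "0 \<le> k"
  shows "k_decomposable k \<Delta>"
  using assms by induction (auto intro: k_decomposable.intros simp: dim_face_def)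

lemma down_closed_deletion: "down_closed \<Delta> \<Longrightarrow> down_closed (deletion \<Delta> F)"
  unfolding down_closed_def deletion_def by blast

lemma down_closed_link: "down_closed \<Delta> \<Longrightarrow> down_closed (link \<Delta> F)"
  unfolding down_closed_def link_def by (auto 4 4 intro: Un_mono)

lemma finite_deletion: "finite \<Delta> \<Longrightarrow> finite (deletion \<Delta> F)"
  unfolding deletion_def by simp

lemma finite_link:
  assumes "finite \<Delta>"
  shows "finite (link \<Delta> F)"
proof -
  have "link \<Delta> F \<subseteq> (\<lambda>G. G - F) ` \<Delta>"
    unfolding link_def by (auto intro!: image_eqI[where x = "_ \<union> F"])
  then show ?thesis
    using assms finite_subset by blast
qed

lemma deletion_empty [simp]: "deletion \<Delta> {} = \<Delta>"
  unfolding deletion_def by simp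

lemma link_empty [simp]: "link \<Delta> {} = \<Delta>"
  unfolding link_def by simp

lemma deletion_deletion: "deletion (deletion \<Delta> D) D' = deletion \<Delta> (D \<union> D')"
  unfolding deletion_def by auto

lemma link_deletion_link:
  assumes "v \<notin> A" and "v \<notin> D"
  shows "link (deletion (link \<Delta> A) D) {v} = deletion (link \<Delta> (insert v A)) D"
  using assms unfolding link_def deletion_def by (auto simp: insert_commute)

lemma deletion_nonvertex:
  assumes "down_closed \<Delta>" and "{v} \<notin> \<Delta>"
  shows "deletion \<Delta> {v} = \<Delta>"
  using assms unfolding down_closed_def deletion_def by blast

lemma shedding_face_deletion_link:
  assumes "v \<notin> A" and "v \<notin> D" and "insert v A \<in> \<Delta>"
    and exchange: "\<And>S. S \<in> \<Delta> \<Longrightarrow> insert v A \<subseteq> S \<Longrightarrow>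
                     \<exists>w. w \<notin> S \<union> D \<and> insert w S - {v} \<in> \<Delta>"
  shows "shedding_face (deletion (link \<Delta> A) D) {v}"
  unfolding shedding_face_def
proof (intro conjI ballI impI)
  show "{v} \<in> deletion (link \<Delta> A) D"
    using assms(1-3) unfolding deletion_def link_def by auto
next
  fix \<tau> u
  assume \<tau>: "\<tau> \<in> deletion (link \<Delta> A) D" "{v} \<subseteq> \<tau>" and "u \<in> {v}"
  then have "u = v" "\<tau> \<union> A \<in> \<Delta>" "\<tau> \<inter> A = {}" "\<tau> \<inter> D = {}"
    unfolding deletion_def link_def by auto
  moreover obtain w where "w \<notin> \<tau> \<union> A \<union> D" "insert w (\<tau> \<union> A) - {v} \<in> \<Delta>"
    using exchange[of "\<tau> \<union> A"] \<tau>(2) \<open>\<tau> \<union> A \<in> \<Delta>\<close> by auto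
  moreover have "(\<tau> \<union> {w} - {v}) \<union> A = insert w (\<tau> \<union> A) - {v}"
    using \<open>v \<notin> A\<close> by auto
  ultimately show "\<exists>w. w \<notin> \<tau> \<and> \<tau> \<union> {w} - {u} \<in> deletion (link \<Delta> A) D"
    unfolding deletion_def link_def by (intro exI[of _ w]) auto
qed

lemma vertex_decomposable_deletion_link_insert:
  assumes "down_closed \<Delta>" and "v \<notin> A" and "v \<notin> D"
    and deleted: "vertex_decomposable (deletion (link \<Delta> A) (insert v D))"
    and shed: "insert v A \<in> \<Delta> \<Longrightarrow> shedding_face (deletion (link \<Delta> A) D) {v}
                 \<and> vertex_decomposable (deletion (link \<Delta> (insert v A)) D)"
  shows "vertex_decomposable (deletion (link \<Delta> A) D)"
proof (cases "insert v A \<in> \<Delta>")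
  case True
  then show ?thesis
    using vertex_decomposable.shed[of _ v] shed deleted assms(2,3)
    by (simp add: deletion_deletion link_deletion_link)
next
  case False
  then have "{v} \<notin> deletion (link \<Delta> A) D"
    unfolding deletion_def link_def by auto
  then have "deletion (deletion (link \<Delta> A) D) {v} = deletion (link \<Delta> A) D"
    using assms(1) by (simp add: deletion_nonvertex down_closed_deletion down_closed_link)
  then show ?thesis
    using deleted by (simp add: deletion_deletion)
qed

lemma deletion_link_full:
  assumes "\<Delta> \<subseteq> Pow N" and "down_closed \<Delta>" and "(N - A - D) \<union> A \<in> \<Delta>"
  shows "deletion (link \<Delta> A) D = Pow (N - A - D)"
proof
  show "deletion (link \<Delta> A) D \<subseteq> Pow (N - A - D)"
    using assms(1) unfolding deletion_def link_def by blast
  show "Pow (N - A - D) \<subseteq> deletion (link \<Delta> A) D"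
  proof
    fix F assume "F \<in> Pow (N - A - D)"
    then have "F \<union> A \<subseteq> (N - A - D) \<union> A" by blast
    then have "F \<union> A \<in> \<Delta>"
      using assms(2,3) unfolding down_closed_def by blast
    then show "F \<in> deletion (link \<Delta> A) D"
      using \<open>F \<in> Pow (N - A - D)\<close> unfolding deletion_def link_def by blast
  qed
qed

lemma deletion_link_nonface:
  assumes "down_closed \<Delta>" and "A \<notin> \<Delta>"
  shows "deletion (link \<Delta> A) D = {}"
  using assms unfolding down_closed_def deletion_def link_def by blast

section \<open>Shellability\<close>

lemma ex_facet_superset:
  assumes "finite \<Delta>" and "G \<in> \<Delta>"
  shows "\<exists>H \<in> facets \<Delta>. G \<subseteq> H"
proof -
  obtain H where "H \<in> \<Delta>" "G \<subseteq> H" "\<forall>H' \<in> \<Delta>. H \<subseteq> H' \<longrightarrow> H = H'"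
    using finite_has_maximal2[OF assms] by blast
  then show ?thesis unfolding facets_def by auto
qed

lemma facets_deletion_subset_facets:
  assumes shed: "shedding_face \<Delta> {v}" and F: "F \<in> facets (deletion \<Delta> {v})"
  shows "F \<in> facets \<Delta>"
proof -
  have "F \<in> \<Delta>" "v \<notin> F"
    using F unfolding facets_def deletion_def by auto
  have "G = F" if G: "G \<in> \<Delta>" "F \<subseteq> G" for G
  proof (cases "v \<in> G")
    case False
    then have "G \<in> deletion \<Delta> {v}" using G unfolding deletion_def by auto
    then show ?thesis using F G unfolding facets_def by blast
  next
    case True
    then obtain w where w: "w \<notin> G" "G \<union> {w} - {v} \<in> \<Delta>"
      using shed G unfolding shedding_face_def by blast
    then have "G \<union> {w} - {v} \<in> deletion \<Delta> {v}" unfolding deletion_def by auto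
    moreover have "F \<subseteq> G \<union> {w} - {v}" using G \<open>v \<notin> F\<close> by auto
    ultimately have "G \<union> {w} - {v} = F" using F unfolding facets_def by blast
    then show ?thesis using w True G by auto
  qed
  with \<open>F \<in> \<Delta>\<close> show ?thesis unfolding facets_def by blast
qed

lemma insert_facets_link_subset_facets:
  assumes F: "F \<in> facets (link \<Delta> {v})"
  shows "insert v F \<in> facets \<Delta>"
proof -
  have "F \<in> link \<Delta> {v}" using F unfolding facets_def by blast
  then have "v \<notin> F" "insert v F \<in> \<Delta>" unfolding link_def by auto
  have "G = insert v F" if G: "G \<in> \<Delta>" "insert v F \<subseteq> G" for G
  proof -
    have "G - {v} \<in> link \<Delta> {v}" "F \<subseteq> G - {v}"
      using G \<open>v \<notin> F\<close> unfolding link_def by (auto simp: insert_absorb)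
    then have "G - {v} = F" using F unfolding facets_def by blast
    then show ?thesis using G by auto
  qed
  with \<open>insert v F \<in> \<Delta>\<close> show ?thesis unfolding facets_def by blast
qed

lemma facets_containing_vertex:
  assumes F: "F \<in> facets \<Delta>" and "v \<in> F"
  shows "F - {v} \<in> facets (link \<Delta> {v})"
proof -
  have "G = F - {v}" if G: "G \<in> link \<Delta> {v}" "F - {v} \<subseteq> G" for G
  proof -
    have "G \<union> {v} \<in> \<Delta>" "F \<subseteq> G \<union> {v}" "v \<notin> G"
      using G unfolding link_def by auto
    then show ?thesis using F unfolding facets_def by auto
  qed
  moreover have "F - {v} \<in> link \<Delta> {v}"
    using F \<open>v \<in> F\<close> unfolding facets_def link_def by (auto simp: insert_absorb)
  ultimately show ?thesis
    unfolding facets_def by simp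
qed

lemma facets_shedding_vertex:
  assumes "shedding_face \<Delta> {v}"
  shows "facets \<Delta> = facets (deletion \<Delta> {v}) \<union> insert v ` facets (link \<Delta> {v})"
proof (intro equalityI subsetI)
  fix F assume F: "F \<in> facets \<Delta>"
  show "F \<in> facets (deletion \<Delta> {v}) \<union> insert v ` facets (link \<Delta> {v})"
  proof (cases "v \<in> F")
    case False
    then have "F \<in> facets (deletion \<Delta> {v})"
      using F unfolding facets_def deletion_def by simp
    then show ?thesis by blast
  next
    case True
    then show ?thesis
      using facets_containing_vertex[OF F True] insert_Diff[OF True] by (metis UnI2 image_eqI)
  qed
next
  fix F assume "F \<in> facets (deletion \<Delta> {v}) \<union> insert v ` facets (link \<Delta> {v})"
  then show "F \<in> facets \<Delta>"
    by (auto intro: facets_deletion_subset_facets[OF assms] insert_facets_link_subset_facets)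
qed

definition is_shelling :: "'b set list \<Rightarrow> bool" where
  "is_shelling Fs \<longleftrightarrow> (\<forall>i j. i < j \<and> j < length Fs \<longrightarrow>
     (\<exists>v \<in> Fs ! j - Fs ! i. \<exists>l < j. Fs ! j - Fs ! l = {v}))"

lemma shellable_iff_is_shelling:
  "shellable \<Delta> \<longleftrightarrow> (\<exists>Fs. distinct Fs \<and> set Fs = facets \<Delta> \<and> is_shelling Fs)"
  unfolding shellable_def is_shelling_def ..

lemma is_simplex_imp_shellable:
  assumes "is_simplex \<Delta>"
  shows "shellable \<Delta>"
proof -
  from assms consider "\<Delta> = {}" | F where "\<Delta> = Pow F"
    unfolding is_simplex_def by blast
  then obtain Fs where "distinct Fs" "set Fs = facets \<Delta>" "length Fs \<le> 1"
  proof cases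
    case 1
    then show ?thesis using that[of "[]"] unfolding facets_def by auto
  next
    case (2 F)
    then show ?thesis using that[of "[F]"] unfolding facets_def by auto
  qed
  then show ?thesis
    unfolding shellable_iff_is_shelling is_shelling_def by (intro exI[of _ Fs]) auto
qed

lemma is_shelling_map_insert:
  assumes "is_shelling Fs" and "\<forall>F \<in> set Fs. v \<notin> F"
  shows "is_shelling (map (insert v) Fs)"
  unfolding is_shelling_def
proof (intro allI impI)
  fix i j assume ij: "i < j \<and> j < length (map (insert v) Fs)"
  then have "i < j \<and> j < length Fs" by simp
  then obtain u l where "u \<in> Fs ! j - Fs ! i" "l < j" "Fs ! j - Fs ! l = {u}"
    using assms(1) unfolding is_shelling_def by blast
  moreover have "v \<notin> Fs ! j" using assms(2) ij by auto
  ultimately show "\<exists>u \<in> map (insert v) Fs ! j - map (insert v) Fs ! i.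
      \<exists>l < j. map (insert v) Fs ! j - map (insert v) Fs ! l = {u}"
    using ij by (intro bexI[of _ u] exI[of _ l]) auto
qed

lemma is_shelling_append:
  assumes Fs: "is_shelling Fs" and Gs: "is_shelling Gs"
    and v_Fs: "\<forall>F \<in> set Fs. v \<notin> F" and cone: "\<forall>G \<in> set Gs. \<exists>F \<in> set Fs. G - F = {v}"
  shows "is_shelling (Fs @ Gs)"
  unfolding is_shelling_def
proof (intro allI impI)
  fix i j assume ij: "i < j \<and> j < length (Fs @ Gs)"
  let ?n = "length Fs" and ?H = "Fs @ Gs"
  show "\<exists>u \<in> ?H ! j - ?H ! i. \<exists>l < j. ?H ! j - ?H ! l = {u}"
  proof (cases "j < ?n")
    case True
    then obtain u l where "u \<in> Fs ! j - Fs ! i" "l < j" "Fs ! j - Fs ! l = {u}"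
      using Fs ij unfolding is_shelling_def by blast
    then show ?thesis
      using True ij by (intro bexI[of _ u] exI[of _ l]) (auto simp: nth_append)
  next
    case False
    then have Hj: "?H ! j = Gs ! (j - ?n)" "j - ?n < length Gs"
      using ij by (auto simp: nth_append)
    show ?thesis
    proof (cases "i < ?n")
      case True
      obtain l where "l < ?n" "Gs ! (j - ?n) - Fs ! l = {v}"
        using cone Hj(2) by (metis in_set_conv_nth nth_mem)
      moreover have "v \<notin> Fs ! i" using v_Fs True by auto
      ultimately show ?thesis
        using Hj True False by (intro bexI[of _ v] exI[of _ l]) (auto simp: nth_append)
    next
      case i_Gs: False
      then have "i - ?n < j - ?n" using ij by auto
      then obtain u l where "u \<in> Gs ! (j - ?n) - Gs ! (i - ?n)" "l < j - ?n"
          "Gs ! (j - ?n) - Gs ! l = {u}"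
        using Gs Hj(2) unfolding is_shelling_def by blast
      then show ?thesis
        using Hj i_Gs by (intro bexI[of _ u] exI[of _ "?n + l"]) (auto simp: nth_append)
    qed
  qed
qed

lemma shellable_if_shedding_vertex:
  assumes shed: "shedding_face \<Delta> {v}" and "down_closed \<Delta>" and "finite \<Delta>"
    and "shellable (deletion \<Delta> {v})" and "shellable (link \<Delta> {v})"
  shows "shellable \<Delta>"
proof -
  obtain Fs where Fs: "distinct Fs" "set Fs = facets (deletion \<Delta> {v})" "is_shelling Fs"
    using assms(4) unfolding shellable_iff_is_shelling by blast
  obtain Gs where Gs: "distinct Gs" "set Gs = facets (link \<Delta> {v})" "is_shelling Gs"
    using assms(5) unfolding shellable_iff_is_shelling by blast
  have v_Fs: "\<forall>F \<in> set Fs. v \<notin> F"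
    using Fs(2) unfolding facets_def deletion_def by auto
  have v_Gs: "\<forall>G \<in> set Gs. v \<notin> G"
    using Gs(2) unfolding facets_def link_def by auto
  have cone: "\<forall>G \<in> set (map (insert v) Gs). \<exists>F \<in> set Fs. G - F = {v}"
  proof
    fix G assume "G \<in> set (map (insert v) Gs)"
    then obtain G0 where G0: "G0 \<in> set Gs" "G = insert v G0" by auto
    then have "G0 \<in> link \<Delta> {v}" "v \<notin> G0"
      using Gs(2) v_Gs unfolding facets_def by auto
    then have "G0 \<in> deletion \<Delta> {v}"
      using \<open>down_closed \<Delta>\<close> unfolding link_def deletion_def down_closed_def by blast
    then obtain F where "F \<in> set Fs" "G0 \<subseteq> F"
      using ex_facet_superset[OF finite_deletion[OF \<open>finite \<Delta>\<close>]] Fs(2) by blast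
    then show "\<exists>F \<in> set Fs. G - F = {v}"
      using G0(2) v_Fs by blast
  qed
  have "distinct (Fs @ map (insert v) Gs)"
  proof -
    have "inj_on (insert v) (set Gs)"
      using v_Gs by (intro inj_onI) (metis Diff_insert_absorb)
    then show ?thesis
      using Fs(1) Gs(1) v_Fs by (auto simp: distinct_map)
  qed
  moreover have "set (Fs @ map (insert v) Gs) = facets \<Delta>"
    using facets_shedding_vertex[OF shed] Fs(2) Gs(2) by simp
  moreover have "is_shelling (Fs @ map (insert v) Gs)"
    using is_shelling_append[OF Fs(3) is_shelling_map_insert[OF Gs(3) v_Gs] v_Fs cone] .
  ultimately show ?thesis
    unfolding shellable_iff_is_shelling by blast
qed

lemma vertex_decomposable_imp_shellable:
  assumes "vertex_decomposable \<Delta>" and "finite \<Delta>" and "down_closed \<Delta>"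
  shows "shellable \<Delta>"
  using assms
proof induction
  case (simplex \<Delta>)
  then show ?case by (simp add: is_simplex_imp_shellable)
next
  case (shed \<Delta> v)
  then show ?case
    by (simp add: shellable_if_shedding_vertex finite_deletion finite_link down_closed_deletion down_closed_link)
qed

section \<open>Clique whiskerings\<close>

locale clique_whiskering =
  fixes V :: "'a set" and E :: "'a \<Rightarrow> 'a \<Rightarrow> bool" and \<Pi> :: "'a set list" and t :: nat
  assumes graph: "simple_graph V E"
    and partition: "clique_vertex_partition V E \<Pi>"
    and t_ge_2: "t \<ge> 2"
begin

abbreviation "V' \<equiv> whisk_V V \<Pi> t"
abbreviation "E' \<equiv> whisk_E E \<Pi> t"
abbreviation "\<Delta> \<equiv> CF t V' E'"

definition whiskers :: "nat \<Rightarrow> ('a + nat \<times> nat) set" where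
  "whiskers i = (\<lambda>j. Inr (i, j)) ` {1..t-1}"

definition block :: "nat \<Rightarrow> ('a + nat \<times> nat) set" where
  "block i = Inl ` (\<Pi> ! i) \<union> whiskers i"

lemma Pi_nth_subset_V: "i < length \<Pi> \<Longrightarrow> \<Pi> ! i \<subseteq> V"
  using partition unfolding clique_vertex_partition_def is_clique_def by auto

lemma ex_Pi_nth_mem: "u \<in> V \<Longrightarrow> \<exists>i < length \<Pi>. u \<in> \<Pi> ! i"
  using partition unfolding clique_vertex_partition_def by (auto simp: in_set_conv_nth)

lemma Inl_mem_V' [simp]: "Inl u \<in> V' \<longleftrightarrow> u \<in> V"
  unfolding whisk_V_def by auto

lemma finite_V': "finite V'"
proof -
  have "{Inr (i, j) | i j. i < length \<Pi> \<and> 1 \<le> j \<and> j \<le> t - 1}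
        \<subseteq> (\<lambda>(i, j). Inr (i, j)) ` ({..<length \<Pi>} \<times> {1..t-1})"
    by auto
  then have "finite {Inr (i, j) | i j. i < length \<Pi> \<and> 1 \<le> j \<and> j \<le> t - 1}"
    by (rule finite_subset) simp
  moreover have "finite V"
    using graph unfolding simple_graph_def by blast
  ultimately show ?thesis
    unfolding whisk_V_def by simp
qed

lemma card_whiskers: "card (whiskers i) = t - 1"
  unfolding whiskers_def by (subst card_image) (auto simp: inj_on_def)

lemma block_subset: "i < length \<Pi> \<Longrightarrow> block i \<subseteq> V'"
  using Pi_nth_subset_V[of i] unfolding block_def whiskers_def whisk_V_def by auto

lemma finite_block: "i < length \<Pi> \<Longrightarrow> finite (block i)"
  using block_subset finite_V' by (rule finite_subset)

lemma is_clique_subset_block: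
  assumes "i < length \<Pi>" and "C \<subseteq> block i"
  shows "is_clique V' E' C"
  unfolding is_clique_def
proof (intro conjI ballI impI)
  show "C \<subseteq> V'" using assms block_subset by blast
next
  fix x y assume "x \<in> C" "y \<in> C" "x \<noteq> y"
  then have "x \<in> block i" "y \<in> block i" "x \<noteq> y" using assms(2) by auto
  moreover have "E a b" if "a \<in> \<Pi> ! i" "b \<in> \<Pi> ! i" "a \<noteq> b" for a b
    using partition assms(1) that unfolding clique_vertex_partition_def is_clique_def by blast
  ultimately show "E' x y"
    using assms(1) unfolding block_def whiskers_def by fastforce
qed

lemma is_clique_whisker_subset_block:
  assumes "is_clique V' E' C" and "Inr (i, j) \<in> C"
  shows "i < length \<Pi> \<and> C \<subseteq> block i"
proof -
  have ij: "i < length \<Pi>" "1 \<le> j" "j \<le> t - 1"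
    using assms unfolding is_clique_def whisk_V_def by auto
  have "c \<in> block i" if "c \<in> C" for c
  proof (cases "c = Inr (i, j)")
    case True
    then show ?thesis using ij unfolding block_def whiskers_def by auto
  next
    case False
    then have "E' (Inr (i, j)) c" using assms that unfolding is_clique_def by auto
    then show ?thesis unfolding block_def whiskers_def
      by (cases c rule: sum.exhaust[case_product prod.exhaust]) auto
  qed
  with ij show ?thesis by auto
qed

lemma faces_subset: "\<Delta> \<subseteq> Pow V'"
  unfolding CF_def by auto

lemma down_closed_faces: "down_closed \<Delta>"
  unfolding down_closed_def CF_def by blast

lemma finite_faces: "finite \<Delta>"
  using finite_subset[OF faces_subset] finite_V' by simp

lemma card_face_Int_block_less:
  assumes "S \<in> \<Delta>" and "i < length \<Pi>"
  shows "card (S \<inter> block i) < t"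
proof (rule ccontr)
  assume "\<not> card (S \<inter> block i) < t"
  then obtain C where "C \<subseteq> S \<inter> block i" "card C = t"
    by (metis not_less obtain_subset_with_card_n)
  moreover have "is_clique V' E' C"
    using is_clique_subset_block[OF assms(2)] \<open>C \<subseteq> S \<inter> block i\<close> by blast
  ultimately show False
    using assms(1) unfolding CF_def by blast
qed

lemma whiskers_subset_block: "whiskers i \<subseteq> block i"
  unfolding block_def by blast

lemma exchange_for_whisker:
  assumes S: "S \<in> \<Delta>" and i: "i < length \<Pi>" and v: "v \<in> S \<inter> block i"
    and w: "w \<in> whiskers i" "w \<notin> S"
  shows "insert w S - {v} \<in> \<Delta>"
proof -
  let ?T = "insert w S - {v}"
  have "?T \<inter> block i = insert w (S \<inter> block i - {v})"
    using v w whiskers_subset_block by auto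
  moreover have "finite (S \<inter> block i)" using finite_block[OF i] by blast
  ultimately have card_T: "card (?T \<inter> block i) = card (S \<inter> block i)"
    using v w(2) card_Suc_Diff1[of "S \<inter> block i" v] by (simp del: card_Diff_insert)
  have no_clique: "\<not> is_clique V' E' C" if C: "C \<subseteq> ?T" "card C = t" for C
  proof
    assume clique: "is_clique V' E' C"
    show False
    proof (cases "w \<in> C")
      case True
      obtain j where "w = Inr (i, j)" using w(1) unfolding whiskers_def by blast
      then have "C \<subseteq> block i"
        using clique True is_clique_whisker_subset_block by simp
      then have "C \<subseteq> ?T \<inter> block i" using C(1) by blast
      then have "card C \<le> card (S \<inter> block i)"
        using card_T finite_block[OF i] by (metis card_mono finite_Int)
      then show False using C(2) card_face_Int_block_less[OF S i] by simp
    next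
      case False
      then have "C \<subseteq> S" using C(1) by blast
      then show False using S C(2) clique unfolding CF_def by blast
    qed
  qed
  have "S \<subseteq> V'" "w \<in> V'"
    using S faces_subset block_subset[OF i] whiskers_subset_block w(1) by blast+
  then have "?T \<subseteq> V'" by blast
  with no_clique show ?thesis
    unfolding CF_def by blast
qed

lemma ex_whisker_not_in_face:
  assumes S: "S \<in> \<Delta>" and i: "i < length \<Pi>" and "u \<in> \<Pi> ! i" and "Inl u \<in> S"
  shows "\<exists>w \<in> whiskers i. w \<notin> S"
proof -
  have "insert (Inl u) (S \<inter> whiskers i) \<subseteq> S \<inter> block i"
    using assms(3,4) unfolding block_def by blast
  then have "card (insert (Inl u) (S \<inter> whiskers i)) < t"
    using card_face_Int_block_less[OF S i] finite_block[OF i]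
    by (meson card_mono finite_Int le_less_trans)
  moreover have "finite (whiskers i)" unfolding whiskers_def by simp
  moreover have "Inl u \<notin> whiskers i" unfolding whiskers_def by blast
  ultimately have "card (S \<inter> whiskers i) < card (whiskers i)"
    using card_whiskers t_ge_2 by simp
  then show ?thesis by (metis Int_absorb1 less_irrefl subsetI)
qed

lemma card_remaining_vertices_less:
  assumes "v \<in> V' - A - D"
  shows "card (V' - insert v A - D) < card (V' - A - D)"
    and "card (V' - A - insert v D) < card (V' - A - D)"
proof -
  have "V' - insert v A - D = V' - A - D - {v}" "V' - A - insert v D = V' - A - D - {v}"
    by auto
  moreover have "card (V' - A - D - {v}) < card (V' - A - D)"
    using assms finite_V' by (intro card_Diff1_less) auto
  ultimately show "card (V' - insert v A - D) < card (V' - A - D)"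
    and "card (V' - A - insert v D) < card (V' - A - D)"
    by simp_all
qed

lemma shedding_original_vertex:
  assumes "D \<inter> range Inr = {}" and v: "Inl u \<in> V' - A - D" and "insert (Inl u) A \<in> \<Delta>"
  shows "shedding_face (deletion (link \<Delta> A) D) {Inl u}"
proof -
  obtain i where i: "i < length \<Pi>" "u \<in> \<Pi> ! i"
    using ex_Pi_nth_mem v by auto
  show ?thesis
  proof (rule shedding_face_deletion_link)
    fix S assume S: "S \<in> \<Delta>" "insert (Inl u) A \<subseteq> S"
    then obtain w where "w \<in> whiskers i" "w \<notin> S"
      using ex_whisker_not_in_face i by blast
    moreover have "Inl u \<in> S \<inter> block i" using S(2) i(2) unfolding block_def by blast
    moreover have "w \<notin> D" using \<open>w \<in> whiskers i\<close> assms(1) unfolding whiskers_def by blast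
    ultimately show "\<exists>w. w \<notin> S \<union> D \<and> insert w S - {Inl u} \<in> \<Delta>"
      using exchange_for_whisker[OF S(1) i(1)] by blast
  qed (use assms in auto)
qed

lemma shedding_whisker_in_clique:
  assumes "Inl ` V \<subseteq> A \<union> D"
    and C: "C \<subseteq> (V' - A - D) \<union> A" "card C = t" "is_clique V' E' C"
    and "c \<in> C" "c \<notin> A" and "insert c A \<in> \<Delta>"
  shows "shedding_face (deletion (link \<Delta> A) D) {c}"
proof -
  have c: "c \<in> V' - A - D" using C(1) \<open>c \<in> C\<close> \<open>c \<notin> A\<close> by blast
  then obtain i j where "c = Inr (i, j)"
    using assms(1) by (cases c) force+
  then have i: "i < length \<Pi>" and C_block: "C \<subseteq> block i"
    using is_clique_whisker_subset_block C(3) \<open>c \<in> C\<close> by blast+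
  show ?thesis
  proof (rule shedding_face_deletion_link)
    fix S assume S: "S \<in> \<Delta>" "insert c A \<subseteq> S"
    have "\<not> C \<subseteq> S" using S(1) C(2,3) unfolding CF_def by blast
    then obtain w where w: "w \<in> C" "w \<notin> S" by blast
    then have "w \<in> V' - A - D" using C(1) S(2) by blast
    moreover have "w \<notin> Inl ` (\<Pi> ! i)"
      using \<open>w \<in> V' - A - D\<close> assms(1) Pi_nth_subset_V[OF i] by blast
    ultimately have "w \<in> whiskers i" "w \<notin> D"
      using C_block w(1) unfolding block_def by auto
    moreover have "c \<in> S \<inter> block i" using S(2) C_block \<open>c \<in> C\<close> by blast
    ultimately show "\<exists>w. w \<notin> S \<union> D \<and> insert w S - {c} \<in> \<Delta>"
      using exchange_for_whisker[OF S(1) i] w(2) by blast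
  qed (use c assms in auto)
qed

lemma vertex_decomposable_only_whiskers_left:
  assumes "Inl ` V \<subseteq> A \<union> D"
  shows "vertex_decomposable (deletion (link \<Delta> A) D)"
  using assms
proof (induction "card (V' - A - D)" arbitrary: A D rule: less_induct)
  case less
  let ?U = "V' - A - D"
  consider "A \<notin> \<Delta>" | "?U \<union> A \<in> \<Delta>" | "A \<in> \<Delta>" "?U \<union> A \<notin> \<Delta>"
    by blast
  then show ?case
  proof cases
    case 1
    then show ?thesis
      using deletion_link_nonface[OF down_closed_faces]
      by (simp add: vertex_decomposable.simplex is_simplex_def)
  next
    case 2
    then show ?thesis
      using deletion_link_full[OF faces_subset down_closed_faces] finite_V'
      by (metis vertex_decomposable.simplex is_simplex_def finite_Diff)
  next
    case 3
    have "?U \<union> A \<subseteq> V'" using 3(1) faces_subset by blast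
    then obtain C where C: "C \<subseteq> ?U \<union> A" "card C = t" "is_clique V' E' C"
      using 3(2) unfolding CF_def by blast
    then obtain c where "c \<in> C" "c \<notin> A"
      using 3(1) unfolding CF_def by blast
    with C(1) have c: "c \<in> ?U" by blast
    have "insert c A \<in> \<Delta> \<Longrightarrow> shedding_face (deletion (link \<Delta> A) D) {c}"
      using shedding_whisker_in_clique[OF less.prems C] \<open>c \<in> C\<close> \<open>c \<notin> A\<close> by blast
    moreover have "vertex_decomposable (deletion (link \<Delta> A) (insert c D))"
      using less.hyps card_remaining_vertices_less(2)[OF c] less.prems by blast
    moreover have "vertex_decomposable (deletion (link \<Delta> (insert c A)) D)"
      using less.hyps card_remaining_vertices_less(1)[OF c] less.prems by blast
    moreover have "c \<notin> A" "c \<notin> D" using c by auto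
    ultimately show ?thesis
      using vertex_decomposable_deletion_link_insert[OF down_closed_faces] by blast
  qed
qed

lemma vertex_decomposable_no_whisker_deleted:
  assumes "D \<inter> range Inr = {}"
  shows "vertex_decomposable (deletion (link \<Delta> A) D)"
  using assms
proof (induction "card (V' - A - D)" arbitrary: A D rule: less_induct)
  case less
  show ?case
  proof (cases "\<exists>u. Inl u \<in> V' - A - D")
    case True
    then obtain u where v: "Inl u \<in> V' - A - D" by blast
    have "insert (Inl u) A \<in> \<Delta> \<Longrightarrow> shedding_face (deletion (link \<Delta> A) D) {Inl u}"
      using shedding_original_vertex[OF less.prems v] by blast
    moreover have "vertex_decomposable (deletion (link \<Delta> A) (insert (Inl u) D))"
      using less.hyps card_remaining_vertices_less(2)[OF v] less.prems by blast
    moreover have "vertex_decomposable (deletion (link \<Delta> (insert (Inl u) A)) D)"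
      using less.hyps card_remaining_vertices_less(1)[OF v] less.prems by blast
    moreover have "Inl u \<notin> A" "Inl u \<notin> D" using v by auto
    ultimately show ?thesis
      using vertex_decomposable_deletion_link_insert[OF down_closed_faces] by blast
  next
    case False
    then have "Inl ` V \<subseteq> A \<union> D" unfolding whisk_V_def by blast
    then show ?thesis by (rule vertex_decomposable_only_whiskers_left)
  qed
qed

lemma vertex_decomposable_faces: "vertex_decomposable \<Delta>"
  using vertex_decomposable_no_whisker_deleted[of "{}" "{}"] by simp

end

theorem theorem4p9:
  fixes V :: "'a set" and E :: "'a \<Rightarrow> 'a \<Rightarrow> bool" and \<Pi> :: "'a set list" and t :: nat
  assumes "simple_graph V E"
    and "clique_vertex_partition V E \<Pi>"
    and "t \<ge> 2"
  shows "k_decomposable (int t - 2) (CF t (whisk_V V \<Pi> t) (whisk_E E \<Pi> t))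
       \<and> shellable (CF t (whisk_V V \<Pi> t) (whisk_E E \<Pi> t))"
proof -
  interpret clique_whiskering V E \<Pi> t
    using assms by unfold_locales
  have "0 \<le> int t - 2" using assms(3) by simp
  then show ?thesis
    using vertex_decomposable_faces finite_faces down_closed_faces
      vertex_decomposable_imp_k_decomposable vertex_decomposable_imp_shellable
    by blast
qed

end
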